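(* Let $\mathcal R$ be a reaction network and suppose $\mathcal U\subseteq\mathcal S$ is eliminable in $\mathcal R$ with respect to $\mathcal F\subseteq\mathcal R_{\mathcal U}$. Let $x,x'\in\mathbb{N}_0^n$. (i) If $x$ leads to $x'$ via $\mathcal R^*_{\mathcal U,\mathcal F}$, then $x$ leads to $x'$ via $\mathcal R$. (ii) Suppose moreover that $\mathcal U$ consists of intermediate species, that $\mathcal F=\mathcal R_{\mathcal U}$, and that $(\mathrm{supp}(x)\cup\mathrm{supp}(x'))\cap\mathcal U=\emptyset$. If $x$ leads to $x'$ via $\mathcal R$, then $x$ leads to $x'$ via $\mathcal R^*_{\mathcal U,\mathcal F}$.
   Context: Species $S_1,\dots,S_n$ are the unit vectors of $\mathbb{N}_0^n$ and $\mathcal S=\{S_1,\dots,S_n\}$; for $x\in\mathbb{N}_0^n$, $\mathrm{supp}(x)=\{S_k: x^k>0\}$. A reaction network (RN) is a (possibly infinite) subset $\mathcal R\subseteq\mathbb{N}_0^n\times\mathbb{N}_0^n$ containing no $(y,y')$ with $y=y'$; elements $(y,y')$ are reactions $y\to y'$ with reactant $y$ and product $y'$. For $r_1=(y_1,y_1'),\ r_2=(y_2,y_2')$ define $r_1\oplus r_2=(y_1+0\vee(y_2-y_1'),\ y_2'+0\vee(y_1'-y_2))$ ($\vee$ componentwise maximum); it is associative. $\mathrm{cl}(A)$ is the set of all finite $\oplus$-sums of elements of $A$, including $(0,0)$. $(y_1,y_1')\sim(0,0)$ means $y_1=y_1'$. For $\mathcal U\subseteq\mathcal S$ and a set $B$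 write $B_{\mathcal U}=\{(y,y')\in B:\mathrm{supp}(y)\cap\mathcal U\neq\emptyset\}$, $B_{\mathcal U}'=\{(y,y')\in B:\mathrm{supp}(y')\cap\mathcal U\neq\emptyset\}$. Set $\overline{\mathcal R}=\mathrm{cl}(\mathcal R)$, $\mathcal R_0=\mathcal R\setminus(\mathcal R_{\mathcal U}\cup\mathcal R_{\mathcal U}')$, $\overline{\mathcal R}_0=\overline{\mathcal R}\setminus(\overline{\mathcal R}_{\mathcal U}\cup\overline{\mathcal R}_{\mathcal U}')$. $\mathcal U$ is eliminable in $\mathcal R$ with respect to $\mathcal F\subseteq\mathcal R_{\mathcal U}$ if for every $r_0\in\mathcal R_{\mathcal U}'$ and $r_1\in\mathrm{cl}(\mathcal F)$ with $r_0\oplus r_1\notin\overline{\mathcal R}_{\mathcal U}$ there is $r_2\in\mathrm{cl}(\mathcal F)$ with $r_0\oplus r_1\oplus r_2\in\overline{\mathcal R}_0$. The reduced RN is $\mathcal R^*_{\mathcal U,\mathcal F}=\mathcal R_0\cup\mathcal R_{\mathcal U,\mathcal F}$ with $\mathcal R_{\mathcal U,\mathcal F}=\{r_0\oplus r_1\in\overline{\mathcal R}_0: r_0\in\mathcal R_{\mathcal U}',\ r_1\in\mathrm{cl}(\mathcal F)\}\setminus\{r:r\sim(0,0)\}$. $\mathcal U$ consists of non-interacting species if for every $y\to y'\in\mathcal R$, $\sum_{S_i\in\mathcal U}y^i\le1$ and $\sum_{S_i\in\mathcal U}(y')^i\le1$; it consists of intermediate species if moreover, for every $S_i\in\mathcal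 U$ and $y\to y'\in\mathcal R$, $y^i=1$ implies $y=S_i$ and $(y')^i=1$ implies $y'=S_i$. An ordered sequence of reactions $y_1\to y_1',\dots,y_m\to y_m'$ is active on $x$ if $x+\sum_{i=1}^{k-1}(y_i'-y_i)\ge y_k$ (componentwise) for all $k$; $x$ leads to $x'$ via an RN if there is an ordered sequence of $m\ge0$ of its reactions (repetitions allowed) active on $x$ with $x'=x+\sum_{i=1}^m(y_i'-y_i)$. *)

theory Defs
  imports Main
begin

text \<open>Complexes are vectors in N_0^n, modelled as functions from a finite species
  type 's to nat; species S_i are identified with elements of 's.\<close>

type_synonym 's complex = "'s \<Rightarrow> nat"
type_synonym 's reaction = "'s complex \<times> 's complex"

definition supp :: "'s complex \<Rightarrow> 's set" where
  "supp x = {k. x k > 0}"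

definition reaction_network :: "'s reaction set \<Rightarrow> bool" where
  "reaction_network R \<longleftrightarrow> (\<forall>(y, y') \<in> R. y \<noteq> y')"

text \<open>r1 \<oplus> r2; truncated nat subtraction is 0 \<or> (a - b).\<close>
definition oplus :: "'s reaction \<Rightarrow> 's reaction \<Rightarrow> 's reaction" (infixl "\<oplus>\<^sub>R" 65) where
  "oplus r1 r2 = (case r1 of (y1, y1') \<Rightarrow> case r2 of (y2, y2') \<Rightarrow>
      ((\<lambda>i. y1 i + (y2 i - y1' i)), (\<lambda>i. y2' i + (y1' i - y2 i))))"

definition cl :: "'s reaction set \<Rightarrow> 's reaction set" where
  "cl A = {foldl oplus ((\<lambda>_. 0), (\<lambda>_. 0)) rs | rs. set rs \<subseteq> A}"

definition sim0 :: "'s reaction \<Rightarrow> bool" where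
  "sim0 r \<longleftrightarrow> fst r = snd r"

definition reactant_in :: "'s set \<Rightarrow> 's reaction set \<Rightarrow> 's reaction set" where
  "reactant_in U B = {r \<in> B. supp (fst r) \<inter> U \<noteq> {}}"

definition product_in :: "'s set \<Rightarrow> 's reaction set \<Rightarrow> 's reaction set" where
  "product_in U B = {r \<in> B. supp (snd r) \<inter> U \<noteq> {}}"

definition zero_part :: "'s set \<Rightarrow> 's reaction set \<Rightarrow> 's reaction set" where
  "zero_part U B = B - (reactant_in U B \<union> product_in U B)"

definition eliminable :: "'s reaction set \<Rightarrow> 's set \<Rightarrow> 's reaction set \<Rightarrow> bool" where
  "eliminable R U F \<longleftrightarrow>
     (\<forall>r0 \<in> product_in U R. \<forall>r1 \<in> cl F.
        r0 \<oplus>\<^sub>R r1 \<notin> reactant_in U (cl R) \<longrightarrow>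
        (\<exists>r2 \<in> cl F. r0 \<oplus>\<^sub>R r1 \<oplus>\<^sub>R r2 \<in> zero_part U (cl R)))"

definition reduced_part :: "'s reaction set \<Rightarrow> 's set \<Rightarrow> 's reaction set \<Rightarrow> 's reaction set" where
  "reduced_part R U F =
     {r0 \<oplus>\<^sub>R r1 | r0 r1. r0 \<in> product_in U R \<and> r1 \<in> cl F \<and> r0 \<oplus>\<^sub>R r1 \<in> zero_part U (cl R)}
     - {r. sim0 r}"

definition reduced_network :: "'s reaction set \<Rightarrow> 's set \<Rightarrow> 's reaction set \<Rightarrow> 's reaction set" where
  "reduced_network R U F = zero_part U R \<union> reduced_part R U F"

definition non_interacting :: "'s set \<Rightarrow> 's reaction set \<Rightarrow> bool" where
  "non_interacting U R \<longleftrightarrow> (\<forall>(y, y') \<in> R. (\<Sum>i\<in>U. y i) \<le> 1 \<and> (\<Sum>i\<in>U. y' i) \<le> 1)"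

definition intermediate :: "'s set \<Rightarrow> 's reaction set \<Rightarrow> bool" where
  "intermediate U R \<longleftrightarrow> non_interacting U R \<and>
     (\<forall>i \<in> U. \<forall>(y, y') \<in> R. (y i = 1 \<longrightarrow> y = (\<lambda>k. if k = i then 1 else 0))
                          \<and> (y' i = 1 \<longrightarrow> y' = (\<lambda>k. if k = i then 1 else 0)))"

text \<open>When the
  sequence is active, each intermediate state x + \<Sum>(y_i' - y_i) is a nonnegative
  vector, computed exactly here as (x - y) + y' with y \<le> x.\<close>
fun active :: "'s complex \<Rightarrow> 's reaction list \<Rightarrow> bool" where
  "active x [] = True"
| "active x ((y, y') # rs) = (y \<le> x \<and> active (\<lambda>i. x i - y i + y' i) rs)"

fun result :: "'s complex \<Rightarrow> 's reaction list \<Rightarrow> 's complex" where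
  "result x [] = x"
| "result x ((y, y') # rs) = result (\<lambda>i. x i - y i + y' i) rs"

definition leads_to :: "'s reaction set \<Rightarrow> 's complex \<Rightarrow> 's complex \<Rightarrow> bool" where
  "leads_to R x x' \<longleftrightarrow> (\<exists>rs. set rs \<subseteq> R \<and> active x rs \<and> result x rs = x')"

end

theory Submission
  imports Defs "HOL-Library.Multiset"
begin

text \<open>(i) Firing \<open>r1 \<oplus>\<^sub>R r2\<close> from a state amounts to firing \<open>r1\<close> and then
  \<open>r2\<close>: the reactant of the sum is exactly what this needs. Every reaction of the reduced
  network lies in \<open>cl R\<close>, so each of its steps is simulated by firing the summands in order.

  (ii) When the species of \<open>U\<close> are intermediates, every copy of an intermediate \<open>i\<close>
  present along an \<open>R\<close>-trajectory sits at the end of an open chain \<open>a \<rightarrow> \<dots> \<rightarrow> i\<close> that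
  started from a \<open>U\<close>-free complex \<open>a\<close>. The reduced network leaves \<open>a\<close> untouched while
  the chain is open and fires the composite \<open>a \<rightarrow> y'\<close> in one step once the chain leaves \<open>U\<close>.
  At the end of a trajectory without intermediates no chain is open, so the two states agree.
  Neither direction needs the eliminability of \<open>U\<close> or the hypothesis that \<open>R\<close> has no
  trivial reactions.\<close>

lemma oplus_Pair:
  "(a, a') \<oplus>\<^sub>R (b, b') = (\<lambda>i. a i + (b i - a' i), \<lambda>i. b' i + (a' i - b i))"
  by (simp add: oplus_def)

lemma oplus_assoc: "(r1 \<oplus>\<^sub>R r2) \<oplus>\<^sub>R r3 = r1 \<oplus>\<^sub>R (r2 \<oplus>\<^sub>R r3)"
proof -
  obtain a a' b b' c c' where "r1 = (a, a')" "r2 = (b, b')" "r3 = (c, c')"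
    by (metis surj_pair)
  then show ?thesis
    by (simp add: oplus_Pair fun_eq_iff) arith
qed

definition null_reaction :: "'s reaction" where
  "null_reaction = ((\<lambda>_. 0), (\<lambda>_. 0))"

lemma oplus_null_left [simp]: "null_reaction \<oplus>\<^sub>R r = r"
  by (cases r) (simp add: oplus_Pair null_reaction_def)

lemma oplus_null_right [simp]: "r \<oplus>\<^sub>R null_reaction = r"
  by (cases r) (simp add: oplus_Pair null_reaction_def)

lemma cl_eq: "cl A = {foldl (\<oplus>\<^sub>R) null_reaction rs | rs. set rs \<subseteq> A}"
  by (simp add: cl_def null_reaction_def)

lemma foldl_oplus: "foldl (\<oplus>\<^sub>R) (r \<oplus>\<^sub>R s) rs = r \<oplus>\<^sub>R foldl (\<oplus>\<^sub>R) s rs"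
  by (induction rs arbitrary: s) (simp_all add: oplus_assoc)

lemma null_in_cl: "null_reaction \<in> cl A"
  unfolding cl_eq by (auto intro: exI[of _ "[]"])

lemma oplus_in_cl: "r \<in> cl A \<Longrightarrow> s \<in> cl A \<Longrightarrow> r \<oplus>\<^sub>R s \<in> cl A"
  unfolding cl_eq
proof clarify
  fix rs ss assume "set rs \<subseteq> A" "set ss \<subseteq> A"
  moreover have "foldl (\<oplus>\<^sub>R) null_reaction rs \<oplus>\<^sub>R foldl (\<oplus>\<^sub>R) null_reaction ss
      = foldl (\<oplus>\<^sub>R) null_reaction (rs @ ss)"
    using foldl_oplus[of "foldl (\<oplus>\<^sub>R) null_reaction rs" null_reaction ss] by simp
  ultimately show "\<exists>qs. foldl (\<oplus>\<^sub>R) null_reaction rs \<oplus>\<^sub>R foldl (\<oplus>\<^sub>R) null_reaction ss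
      = foldl (\<oplus>\<^sub>R) null_reaction qs \<and> set qs \<subseteq> A"
    by (intro exI[of _ "rs @ ss"]) auto
qed

lemma subset_cl: "A \<subseteq> cl A"
proof
  fix r assume "r \<in> A"
  then have "foldl (\<oplus>\<^sub>R) null_reaction [r] \<in> cl A"
    unfolding cl_eq by (intro CollectI exI[of _ "[r]"]) simp
  then show "r \<in> cl A" by simp
qed

lemma cl_mono: "A \<subseteq> B \<Longrightarrow> cl A \<subseteq> cl B"
  unfolding cl_eq by blast

lemma cl_induct [consumes 1, case_names null snoc]:
  assumes "r \<in> cl A" and "P null_reaction"
    and "\<And>r s. r \<in> cl A \<Longrightarrow> P r \<Longrightarrow> s \<in> A \<Longrightarrow> P (r \<oplus>\<^sub>R s)"
  shows "P r"
proof -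
  obtain rs where rs: "set rs \<subseteq> A" "r = foldl (\<oplus>\<^sub>R) null_reaction rs"
    using assms(1) unfolding cl_eq by blast
  have "foldl (\<oplus>\<^sub>R) null_reaction rs \<in> cl A \<and> P (foldl (\<oplus>\<^sub>R) null_reaction rs)"
    using rs(1)
  proof (induction rs rule: rev_induct)
    case (snoc s rs)
    then have "foldl (\<oplus>\<^sub>R) null_reaction rs \<in> cl A" "P (foldl (\<oplus>\<^sub>R) null_reaction rs)"
      and "s \<in> A" by auto
    moreover have "s \<in> cl A" using \<open>s \<in> A\<close> subset_cl by blast
    ultimately show ?case
      using assms(3) oplus_in_cl by simp
  qed (simp add: null_in_cl assms(2))
  then show ?thesis using rs(2) by simp
qed

definition fire :: "'s complex \<Rightarrow> 's reaction \<Rightarrow> 's complex" where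
  "fire x r = (\<lambda>i. x i - fst r i + snd r i)"

lemma active_Cons_fire: "active x (r # rs) \<longleftrightarrow> fst r \<le> x \<and> active (fire x r) rs"
  by (cases r) (simp add: fire_def)

lemma result_Cons_fire: "result x (r # rs) = result (fire x r) rs"
  by (cases r) (simp add: fire_def)

lemma fire_null [simp]: "fire x null_reaction = x"
  by (simp add: fire_def null_reaction_def)

lemma fire_oplus:
  assumes "fst (r \<oplus>\<^sub>R s) \<le> x"
  shows "fst r \<le> x" and "fst s \<le> fire x r" and "fire (fire x r) s = fire x (r \<oplus>\<^sub>R s)"
proof -
  obtain a a' b b' where rs: "r = (a, a')" "s = (b, b')" by fastforce
  have le: "a i + (b i - a' i) \<le> x i" for i
    using assms by (simp add: rs oplus_Pair le_fun_def)
  have "a i \<le> x i" "b i \<le> x i - a i + a' i"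
    "x i - a i + a' i - b i + b' i = x i - (a i + (b i - a' i)) + (b' i + (a' i - b i))" for i
    using le[of i] by arith+
  then show "fst r \<le> x" and "fst s \<le> fire x r" and "fire (fire x r) s = fire x (r \<oplus>\<^sub>R s)"
    by (simp_all add: rs oplus_Pair fire_def le_fun_def fun_eq_iff)
qed

lemma leads_to_refl: "leads_to N x x"
  unfolding leads_to_def by (auto intro: exI[of _ "[]"])

lemma active_append: "active x (rs @ qs) \<longleftrightarrow> active x rs \<and> active (result x rs) qs"
  by (induction rs arbitrary: x) (simp_all add: active_Cons_fire result_Cons_fire)

lemma result_append: "result x (rs @ qs) = result (result x rs) qs"
  by (induction rs arbitrary: x) (simp_all add: result_Cons_fire)

lemma leads_to_trans: "leads_to N x y \<Longrightarrow> leads_to N y z \<Longrightarrow> leads_to N x z"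
  unfolding leads_to_def
  by (metis active_append result_append set_append le_sup_iff)

lemma leads_to_fire: "r \<in> N \<Longrightarrow> fst r \<le> x \<Longrightarrow> leads_to N x (fire x r)"
  unfolding leads_to_def
  by (intro exI[of _ "[r]"]) (simp add: active_Cons_fire result_Cons_fire)

lemma leads_to_simulate:
  assumes "\<And>r x. r \<in> M \<Longrightarrow> fst r \<le> x \<Longrightarrow> leads_to N x (fire x r)"
    and "leads_to M x x'"
  shows "leads_to N x x'"
proof -
  obtain rs where "set rs \<subseteq> M" "active x rs" "result x rs = x'"
    using assms(2) unfolding leads_to_def by blast
  then show ?thesis
  proof (induction rs arbitrary: x)
    case Nil
    then show ?case by (simp add: leads_to_refl)
  next
    case (Cons r rs)
    then show ?case
      using assms(1) leads_to_trans by (simp add: active_Cons_fire result_Cons_fire) blast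
  qed
qed

lemma leads_to_fire_cl:
  assumes "r \<in> cl R" "fst r \<le> x"
  shows "leads_to R x (fire x r)"
  using assms
proof (induction arbitrary: x rule: cl_induct)
  case null
  then show ?case by (simp add: leads_to_refl)
next
  case (snoc r s)
  have "leads_to R x (fire x r)"
    using fire_oplus(1)[OF snoc.prems] by (rule snoc.IH)
  moreover have "leads_to R (fire x r) (fire (fire x r) s)"
    using fire_oplus(2)[OF snoc.prems] by (rule leads_to_fire[OF snoc.hyps(2)])
  ultimately show ?case
    unfolding fire_oplus(3)[OF snoc.prems] by (rule leads_to_trans)
qed

lemma reduced_network_subset_cl: "reduced_network R U F \<subseteq> cl R"
  using subset_cl[of R]
  unfolding reduced_network_def reduced_part_def zero_part_def by blast

lemma leads_to_reduced_network_imp_leads_to: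
  "leads_to (reduced_network R U F) x x' \<Longrightarrow> leads_to R x x'"
  by (erule leads_to_simulate[rotated])
    (use reduced_network_subset_cl leads_to_fire_cl in blast)

definition unit_complex :: "'s \<Rightarrow> 's complex" where
  "unit_complex i = (\<lambda>k. if k = i then 1 else 0)"

lemma supp_disjoint_iff: "supp y \<inter> U = {} \<longleftrightarrow> (\<forall>k\<in>U. y k = 0)"
  by (auto simp: supp_def)

lemma zero_on_or_unit_complex:
  assumes "finite U" and "(\<Sum>i\<in>U. z i) \<le> 1" and "\<forall>i\<in>U. z i = 1 \<longrightarrow> z = unit_complex i"
  shows "(\<forall>k\<in>U. z k = 0) \<or> (\<exists>i\<in>U. z = unit_complex i)"
proof (cases "\<forall>k\<in>U. z k = 0")
  case False
  then obtain i where i: "i \<in> U" "z i \<noteq> 0" by blast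
  have "z i \<le> (\<Sum>i\<in>U. z i)" using member_le_sum[of i U z] assms(1) i(1) by simp
  with assms(2) i have "z i = 1" by linarith
  with assms(3) i(1) show ?thesis by blast
qed simp

lemma intermediate_cases:
  assumes "intermediate U R" and "(y, y') \<in> R" and "finite U"
  shows "(\<forall>k\<in>U. y k = 0) \<or> (\<exists>i\<in>U. y = unit_complex i)"
    and "(\<forall>k\<in>U. y' k = 0) \<or> (\<exists>i\<in>U. y' = unit_complex i)"
proof -
  have "(\<Sum>i\<in>U. y i) \<le> 1 \<and> (\<Sum>i\<in>U. y' i) \<le> 1"
    using assms(1,2) unfolding intermediate_def non_interacting_def by blast
  moreover have "\<forall>i\<in>U. (y i = 1 \<longrightarrow> y = unit_complex i) \<and> (y' i = 1 \<longrightarrow> y' = unit_complex i)"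
    using assms(1,2) unfolding intermediate_def unit_complex_def by blast
  ultimately show "(\<forall>k\<in>U. y k = 0) \<or> (\<exists>i\<in>U. y = unit_complex i)"
    and "(\<forall>k\<in>U. y' k = 0) \<or> (\<exists>i\<in>U. y' = unit_complex i)"
    using zero_on_or_unit_complex[OF assms(3)] by blast+
qed

definition elim_chains :: "'s reaction set \<Rightarrow> 's set \<Rightarrow> 's reaction set \<Rightarrow> 's reaction set" where
  "elim_chains R U F = {r0 \<oplus>\<^sub>R r1 | r0 r1. r0 \<in> product_in U R \<and> r1 \<in> cl F}"

lemma product_in_subset_elim_chains: "product_in U R \<subseteq> elim_chains R U F"
proof
  fix r assume "r \<in> product_in U R"
  then show "r \<in> elim_chains R U F"
    unfolding elim_chains_def
    by (intro CollectI exI[of _ r] exI[of _ null_reaction]) (simp add: null_in_cl)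
qed

lemma elim_chains_oplus: "r \<in> elim_chains R U F \<Longrightarrow> s \<in> F \<Longrightarrow> r \<oplus>\<^sub>R s \<in> elim_chains R U F"
  unfolding elim_chains_def using oplus_assoc oplus_in_cl subset_cl by blast

lemma elim_chains_subset_cl:
  assumes "F \<subseteq> R"
  shows "elim_chains R U F \<subseteq> cl R"
proof
  fix r assume "r \<in> elim_chains R U F"
  then obtain r0 r1 where r: "r = r0 \<oplus>\<^sub>R r1" "r0 \<in> R" "r1 \<in> cl F"
    unfolding elim_chains_def product_in_def by blast
  have "r0 \<in> cl R" using r(2) subset_cl by blast
  moreover have "r1 \<in> cl R" using r(3) cl_mono[OF assms] by blast
  ultimately show "r \<in> cl R" unfolding r(1) by (rule oplus_in_cl)
qed

lemma reduced_part_eq: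
  "reduced_part R U F = elim_chains R U F \<inter> zero_part U (cl R) - {r. sim0 r}"
  unfolding reduced_part_def elim_chains_def by blast

lemma elim_chain_in_reduced_network:
  assumes "r \<in> elim_chains R U F" "F \<subseteq> R" "\<forall>k\<in>U. fst r k = 0" "\<forall>k\<in>U. snd r k = 0"
    and "fst r \<noteq> snd r"
  shows "r \<in> reduced_network R U F"
proof -
  have "r \<in> zero_part U (cl R)"
    using assms(1,3,4) elim_chains_subset_cl[OF assms(2)]
    unfolding zero_part_def reactant_in_def product_in_def supp_disjoint_iff by blast
  with assms(1,5) show ?thesis
    unfolding reduced_network_def reduced_part_eq sim0_def by blast
qed

lemma oplus_link: "(a, b) \<oplus>\<^sub>R (b, c) = (a, c)"
  by (simp add: oplus_Pair)

text \<open>The \<open>R\<close>-state \<open>x\<close> is tracked by the reduced state \<open>w\<close> with open chains \<open>P\<close>: an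
  element \<open>(a, i)\<close> of \<open>P\<close> is a composite \<open>a \<rightarrow> i\<close> whose reactant \<open>a\<close> has been
  consumed in \<open>x\<close> but is still present in \<open>w\<close>.\<close>
definition tracks :: "'s reaction set \<Rightarrow> 's set \<Rightarrow> 's reaction set \<Rightarrow>
    's complex \<Rightarrow> 's complex \<Rightarrow> ('s complex \<times> 's) multiset \<Rightarrow> bool"
  where
  "tracks R U F x w P \<longleftrightarrow>
     (\<forall>k. k \<notin> U \<longrightarrow> w k = x k + (\<Sum>c\<in>#P. fst c k))
   \<and> (\<forall>k\<in>U. w k = 0 \<and> x k = count (image_mset snd P) k)
   \<and> (\<forall>c\<in>#P. snd c \<in> U \<and> (\<forall>k\<in>U. fst c k = 0)
         \<and> (fst c, unit_complex (snd c)) \<in> elim_chains R U F)"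

lemma tracks_init: "\<forall>k\<in>U. x k = 0 \<Longrightarrow> tracks R U F x x {#}"
  by (simp add: tracks_def)

lemma tracks_final:
  assumes "tracks R U F x w P" and "\<forall>k\<in>U. x k = 0"
  shows "w = x"
proof -
  have "P = {#}"
  proof (rule ccontr)
    assume "P \<noteq> {#}"
    then obtain c where "c \<in># P" by blast
    then have "snd c \<in> U" and "count (image_mset snd P) (snd c) \<noteq> 0"
      using assms(1) by (auto simp: tracks_def)
    with assms show False by (auto simp: tracks_def)
  qed
  show ?thesis
  proof
    fix k show "w k = x k"
      using assms \<open>P = {#}\<close> by (cases "k \<in> U") (simp_all add: tracks_def)
  qed
qed

lemma tracks_below:
  assumes "tracks R U F x w P" and "c \<in># P"
  shows "fst c \<le> w"
proof -
  have "fst c k \<le> w k" for k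
  proof (cases "k \<in> U")
    case False
    obtain Q where "P = add_mset c Q" using multi_member_split[OF assms(2)] ..
    then have "fst c k \<le> (\<Sum>c\<in>#P. fst c k)" by simp
    with assms(1) False show ?thesis by (simp add: tracks_def)
  qed (use assms in \<open>auto simp: tracks_def\<close>)
  then show ?thesis by (simp add: le_fun_def)
qed

lemma tracks_fire_outside:
  assumes T: "tracks R U F x w P" and r: "r \<in> R" "fst r \<le> x"
    and U: "\<forall>k\<in>U. fst r k = 0" "\<forall>k\<in>U. snd r k = 0"
  shows "leads_to (reduced_network R U F) w (fire w r)"
    and "tracks R U F (fire x r) (fire w r) P"
proof -
  have "r \<in> reduced_network R U F"
    using r(1) U unfolding reduced_network_def zero_part_def reactant_in_def product_in_def
      supp_disjoint_iff by blast
  moreover have "fst r k \<le> w k" for k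
    using T r(2) U by (cases "k \<in> U") (auto simp: tracks_def le_fun_def intro: trans_le_add1)
  ultimately show "leads_to (reduced_network R U F) w (fire w r)"
    by (simp add: leads_to_fire le_fun_def)
  have "fire w r k = fire x r k + (\<Sum>c\<in>#P. fst c k)" if "k \<notin> U" for k
  proof -
    have "w k = x k + (\<Sum>c\<in>#P. fst c k)" "fst r k \<le> x k"
      using T r(2) that by (auto simp: tracks_def le_fun_def)
    then show ?thesis unfolding fire_def by arith
  qed
  with T U show "tracks R U F (fire x r) (fire w r) P"
    by (simp add: tracks_def fire_def)
qed

lemma tracks_open_chain:
  assumes T: "tracks R U F x w P" and r: "(y, unit_complex j) \<in> R" "y \<le> x"
    and U: "\<forall>k\<in>U. y k = 0" "j \<in> U"
  shows "tracks R U F (fire x (y, unit_complex j)) w (add_mset (y, j) P)"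
proof -
  have "(y, unit_complex j) \<in> product_in U R"
    using r(1) U(2) by (auto simp: product_in_def supp_def unit_complex_def)
  then have "(y, unit_complex j) \<in> elim_chains R U F"
    using product_in_subset_elim_chains by blast
  with T r(2) U show ?thesis
    by (auto simp: tracks_def fire_def le_fun_def unit_complex_def)
qed

lemma tracks_continue_chain:
  assumes T: "tracks R U F x w (add_mset (a, i) Q)" and U: "i \<in> U" "j \<in> U"
    and chain: "(a, unit_complex j) \<in> elim_chains R U F"
  shows "tracks R U F (fire x (unit_complex i, unit_complex j)) w (add_mset (a, j) Q)"
  using T U chain by (auto simp: tracks_def fire_def unit_complex_def)

lemma tracks_close_chain:
  assumes T: "tracks R U F x w (add_mset (a, i) Q)" and U: "i \<in> U" "\<forall>k\<in>U. y' k = 0"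
    and chain: "(a, y') \<in> elim_chains R U F" and "F \<subseteq> R"
  shows "leads_to (reduced_network R U F) w (fire w (a, y'))"
    and "tracks R U F (fire x (unit_complex i, y')) (fire w (a, y')) Q"
proof -
  have a: "a \<le> w"
    using tracks_below[OF T, of "(a, i)"] by simp
  have aU: "\<forall>k\<in>U. a k = 0"
    using T by (simp add: tracks_def)
  show "leads_to (reduced_network R U F) w (fire w (a, y'))"
  proof (cases "a = y'")
    case True
    with a have "fire w (a, y') = w" by (simp add: fire_def le_fun_def fun_eq_iff)
    then show ?thesis by (simp add: leads_to_refl)
  next
    case False
    with elim_chain_in_reduced_network[OF chain \<open>F \<subseteq> R\<close>] aU U(2)
    have "(a, y') \<in> reduced_network R U F" by simp
    with a show ?thesis by (simp add: leads_to_fire)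
  qed
  show "tracks R U F (fire x (unit_complex i, y')) (fire w (a, y')) Q"
    using T U aU by (auto simp: tracks_def fire_def unit_complex_def)
qed

lemma tracks_fire:
  assumes inter: "intermediate U R" and F: "F = reactant_in U R" and "finite U"
    and T: "tracks R U F x w P" and r: "(y, y') \<in> R" "y \<le> x"
  shows "\<exists>w' P'. leads_to (reduced_network R U F) w w' \<and> tracks R U F (fire x (y, y')) w' P'"
proof -
  consider "\<forall>k\<in>U. y k = 0" "\<forall>k\<in>U. y' k = 0"
    | j where "\<forall>k\<in>U. y k = 0" "j \<in> U" "y' = unit_complex j"
    | i where "i \<in> U" "y = unit_complex i"
    using intermediate_cases[OF inter r(1) \<open>finite U\<close>] by blast
  then show ?thesis
  proof cases
    case 1
    then have "leads_to (reduced_network R U F) w (fire w (y, y'))"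
      and "tracks R U F (fire x (y, y')) (fire w (y, y')) P"
      using tracks_fire_outside[of R U F x w P "(y, y')"] T r by simp_all
    then show ?thesis by blast
  next
    case (2 j)
    then have "tracks R U F (fire x (y, y')) w (add_mset (y, j) P)"
      using tracks_open_chain[OF T _ r(2)] r(1) by simp
    then show ?thesis using leads_to_refl by blast
  next
    case (3 i)
    have "count (image_mset snd P) i = x i"
      using T 3 by (simp add: tracks_def)
    moreover have "y i \<le> x i" using r(2) by (simp add: le_fun_def)
    ultimately have "count (image_mset snd P) i \<noteq> 0"
      using 3 by (simp add: unit_complex_def)
    then have "i \<in># image_mset snd P" by (meson count_eq_zero_iff)
    then obtain a where "(a, i) \<in># P" by force
    then obtain Q where P: "P = add_mset (a, i) Q" by (blast dest: multi_member_split)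
    have "(a, unit_complex i) \<in> elim_chains R U F"
      using T P by (simp add: tracks_def)
    moreover have "(unit_complex i, y') \<in> F"
      using r(1) 3 F by (auto simp: reactant_in_def supp_def unit_complex_def)
    ultimately have "(a, unit_complex i) \<oplus>\<^sub>R (unit_complex i, y') \<in> elim_chains R U F"
      by (rule elim_chains_oplus)
    then have chain: "(a, y') \<in> elim_chains R U F" by (simp only: oplus_link)
    have T': "tracks R U F x w (add_mset (a, i) Q)" using T P by simp
    consider "\<forall>k\<in>U. y' k = 0" | j where "j \<in> U" "y' = unit_complex j"
      using intermediate_cases(2)[OF inter r(1) \<open>finite U\<close>] by blast
    then show ?thesis
    proof cases
      case 1
      have "F \<subseteq> R" using F by (auto simp: reactant_in_def)
      then have "leads_to (reduced_network R U F) w (fire w (a, y'))"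
        and "tracks R U F (fire x (y, y')) (fire w (a, y')) Q"
        using tracks_close_chain[OF T' \<open>i \<in> U\<close> 1 chain] 3 by simp_all
      then show ?thesis by blast
    next
      case (2 j)
      then have "tracks R U F (fire x (y, y')) w (add_mset (a, j) Q)"
        using tracks_continue_chain[OF T' \<open>i \<in> U\<close>] chain 3 by simp
      then show ?thesis using leads_to_refl by blast
    qed
  qed
qed

lemma tracks_result:
  assumes "intermediate U R" and "F = reactant_in U R" and "finite U"
  shows "set rs \<subseteq> R \<Longrightarrow> active x rs \<Longrightarrow> tracks R U F x w P \<Longrightarrow>
    \<exists>w' P'. leads_to (reduced_network R U F) w w' \<and> tracks R U F (result x rs) w' P'"
proof (induction rs arbitrary: x w P)
  case Nil
  then show ?case using leads_to_refl by auto
next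
  case (Cons r rs)
  obtain y y' where r: "r = (y, y')" by fastforce
  with Cons.prems have "(y, y') \<in> R" "y \<le> x" "set rs \<subseteq> R" "active (fire x r) rs"
    by (auto simp: active_Cons_fire)
  then obtain w1 P1 where
    "leads_to (reduced_network R U F) w w1" "tracks R U F (fire x r) w1 P1"
    using tracks_fire[OF assms Cons.prems(3)] r by blast
  moreover obtain w2 P2 where
    "leads_to (reduced_network R U F) w1 w2" "tracks R U F (result x (r # rs)) w2 P2"
    using Cons.IH[OF \<open>set rs \<subseteq> R\<close> \<open>active (fire x r) rs\<close> calculation(2)]
    by (auto simp: result_Cons_fire)
  ultimately show ?case using leads_to_trans by blast
qed

lemma leads_to_imp_leads_to_reduced_network:
  assumes "intermediate U R" and "F = reactant_in U R" and "finite U"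
    and "(supp x \<union> supp x') \<inter> U = {}" and "leads_to R x x'"
  shows "leads_to (reduced_network R U F) x x'"
proof -
  obtain rs where rs: "set rs \<subseteq> R" "active x rs" "result x rs = x'"
    using assms(5) unfolding leads_to_def by blast
  have "supp x \<inter> U = {}" "supp x' \<inter> U = {}"
    using assms(4) by auto
  then have x: "\<forall>k\<in>U. x k = 0" "\<forall>k\<in>U. x' k = 0"
    by (simp_all only: supp_disjoint_iff)
  obtain w P where "leads_to (reduced_network R U F) x w" "tracks R U F x' w P"
    using tracks_result[OF assms(1-3) rs(1,2) tracks_init[OF x(1)]] rs(3) by blast
  moreover from this(2) have "w = x'" using x(2) by (rule tracks_final)
  ultimately show ?thesis by simp
qed

theorem theorem5p6:
  fixes R F :: "('s::finite) reaction set" and U :: "'s set"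
  assumes "reaction_network R"
    and "F \<subseteq> reactant_in U R"
    and "eliminable R U F"
  shows "(\<forall>x x'. leads_to (reduced_network R U F) x x' \<longrightarrow> leads_to R x x')
       \<and> (intermediate U R \<and> F = reactant_in U R \<longrightarrow>
           (\<forall>x x'. (supp x \<union> supp x') \<inter> U = {} \<longrightarrow>
               leads_to R x x' \<longrightarrow> leads_to (reduced_network R U F) x x'))"
proof (intro conjI allI impI)
  show "leads_to R x x'" if "leads_to (reduced_network R U F) x x'" for x x'
    using that by (rule leads_to_reduced_network_imp_leads_to)
  show "leads_to (reduced_network R U F) x x'"
    if "intermediate U R \<and> F = reactant_in U R" and "(supp x \<union> supp x') \<inter> U = {}"
      and "leads_to R x x'" for x x'
    using that leads_to_imp_leads_to_reduced_network[OF _ _ finite] by blast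
qed

end
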